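(* Let $c>0$ and let $F:\mathbb{S}^3(c/4)\to T^1\mathbb{S}^2(c)$ be the map defined in the context. Then $F$ is a covering map with $F(-y)=F(y)$, and: (1) For $m=\log_2 c$ and any $r\ge 0$, $F$ induces an isometry from the real projective space $\mathbb{R}\mathrm{P}^3(c/4)=\mathbb{S}^3(c/4)/\{\pm 1\}$, with the metric of constant curvature $c/4$ induced from $\mathbb{S}^3(c/4)$, onto $T^1\mathbb{S}^2(c)$ equipped with the Riemannian metric obtained by restricting the generalized Cheeger–Gromoll metric $h_{m,r}$ of $T\mathbb{S}^2(c)$. Equivalently, $F^*(h_{m,r}|_{T^1\mathbb{S}^2(c)})$ is the round metric of $\mathbb{S}^3(c/4)$. (2) Take $c=4$, so that $\mathbb{S}^3(c/4)=\mathbb{S}^3$ and $F:\mathbb{S}^3\to T^1\mathbb{S}^2(4)$. Let $\epsilon>0$ and let $g_\epsilon$ be the Berger metric on $\mathbb{S}^3$, i.e. the Riemannian metric for which $\{X_1,X_2,\epsilon X_3\}$ is an orthonormal frame. Then for $m=\log_2(\epsilon^2)+2$ and any $r\ge0$, $F$ induces an isometry from $(\mathbb{R}\mathrm{P}^3,g_\epsilon)$ (the quotient of $(\mathbb{S}^3,g_\epsilon)$ by $\pm1$) onto $(T^1\mathbb{S}^2(4),h_{m,r}|_{T^1\mathbb{S}^2(4)})$.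
   Context: For $c>0$, $\mathbb{S}^n(c)=\{x\in\mathbb{R}^{n+1}:|x|=1/\sqrt c\}$ with the metric induced from Euclidean $\mathbb{R}^{n+1}$ (constant curvature $c$); $\mathbb{S}^n=\mathbb{S}^n(1)$. For $x=(x^1,x^2,x^3,x^4)\in\mathbb{R}^4$ write $z_1=x^1+\sqrt{-1}x^2$, $z_2=x^3+\sqrt{-1}x^4$. On $\mathbb{S}^3$ define the orthonormal vector fields - $X_1(x)=(-x^4,-x^3,x^2,x^1)$, - $X_2(x)=(-x^3,x^4,x^1,-x^2)$, - $X_3(x)=(-x^2,x^1,-x^4,x^3)$. For $x\in\mathbb{S}^3$ let $A_x=\begin{pmatrix}z_1&-\bar z_2\\ z_2&\bar z_1\end{pmatrix}\in\mathrm{SU}(2)$. Let $e_1=\begin{pmatrix}0&\sqrt{-1}\\ \sqrt{-1}&0\end{pmatrix}$, $e_2=\begin{pmatrix}0&-1\\1&0\end{pmatrix}$, $e_3=\begin{pmatrix}\sqrt{-1}&0\\0&-\sqrt{-1}\end{pmatrix}$. These form an orthonormal basis of $\mathfrak{su}(2)$ for $\langle X,Y\rangle=-\tfrac12\mathrm{Tr}(XY)$. Identify $\mathfrak{su}(2)$ with $\mathbb{R}^3$ via coordinates in this basis. Then $\rho(A_x)\in\mathrm{SO}(3)$ is the matrix of $Y\mapsto A_xYA_x^{-1}$, whose columns are the coordinate vectors of $A_xe_jA_x^{-1}$: - $A_xe_1A_x^{-1}=(\mathrm{Re}(z_1^2-\bar z_2^2),\ \mathrm{Im}(z_1^2-\bar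 z_2^2),\ -2\mathrm{Re}(z_1z_2))$, - $A_xe_2A_x^{-1}=(\mathrm{Im}(\bar z_1^2+z_2^2),\ \mathrm{Re}(\bar z_1^2+z_2^2),\ 2\mathrm{Im}(z_1z_2))$, - $A_xe_3A_x^{-1}=(2\mathrm{Re}(z_1\bar z_2),\ 2\mathrm{Im}(z_1\bar z_2),\ |z_1|^2-|z_2|^2)$. The unit tangent bundle is $T^1\mathbb{S}^2(c)=\{(p,v)\in\mathbb{R}^3\times\mathbb{R}^3: |p|=1/\sqrt c,\ |v|=1,\ \langle p,v\rangle=0\}$, with projection $\pi(p,v)=p$. The map $F:\mathbb{S}^3(c/4)\to T^1\mathbb{S}^2(c)$ is $$F(2x/\sqrt c)=\big(\tfrac1{\sqrt c}A_xe_3A_x^{-1},\ A_xe_1A_x^{-1}\big),\qquad x\in\mathbb{S}^3,$$ i.e. $F=\phi\circ\rho\circ\psi\circ\iota$ with $\iota(2x/\sqrt c)=x$, $\psi(x)=A_x$, and $\phi(c_1\,c_2\,c_3)=(c_3/\sqrt c,c_1)$. Lifts: $T\mathbb{S}^2(c)\subset\mathbb{R}^3\times\mathbb{R}^3$. For $(p,e)\in T\mathbb{S}^2(c)$ and $X\in T_p\mathbb{S}^2(c)$: - the vertical lift $X^v\in T_{(p,e)}T\mathbb{S}^2(c)$ is the velocity at $t=0$ of $t\mapsto(p,e+tX)$; - the horizontal lift $X^h$ is the velocity at $t=0$ of $t\mapsto(\gamma(t),V(t))$, where $\gamma$ is a curve in $\mathbb{S}^2(c)$ with $\gamma(0)=p$,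 $\dot\gamma(0)=X$, and $V$ is the Levi-Civita parallel field along $\gamma$ with $V(0)=e$. Every tangent vector of $T\mathbb{S}^2(c)$ at $(p,e)$ is uniquely $X^h+Y^v$, and $T_{(p,e)}T^1\mathbb{S}^2(c)=\{X^h+Y^v:\langle Y,e\rangle=0\}$. Generalized Cheeger–Gromoll metric: for $m\in\mathbb{R}$ and $r\ge0$, $h_{m,r}$ on $T\mathbb{S}^2(c)$ is given at $(p,e)$ by - $h_{m,r}(X^h,Y^h)=\langle X,Y\rangle$, - $h_{m,r}(X^h,Y^v)=0$, - $h_{m,r}(X^v,Y^v)=\omega^m(\langle X,Y\rangle+r\langle X,e\rangle\langle Y,e\rangle)$, where $\omega=1/(1+|e|^2)$. *)

theory Defs
  imports "HOL-Analysis.Analysis"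
begin

definition Sph :: "real \<Rightarrow> 'a::real_normed_vector set" where
  "Sph c = sphere 0 (1 / sqrt c)"

definition UT :: "real \<Rightarrow> ((real^3) \<times> (real^3)) set" where
  "UT c = {(p, v). norm p = 1 / sqrt c \<and> norm v = 1 \<and> inner p v = 0}"

(* columns of rho(A_x): coordinates of A_x e_j A_x^{-1} *)
definition col1 :: "real^4 \<Rightarrow> real^3" where
  "col1 x = (let z1 = Complex (x$1) (x$2); z2 = Complex (x$3) (x$4) in
     vector [Re (z1^2 - cnj z2^2), Im (z1^2 - cnj z2^2), - 2 * Re (z1 * z2)])"

definition col3 :: "real^4 \<Rightarrow> real^3" where
  "col3 x = (let z1 = Complex (x$1) (x$2); z2 = Complex (x$3) (x$4) in
     vector [2 * Re (z1 * cnj z2), 2 * Im (z1 * cnj z2), (cmod z1)^2 - (cmod z2)^2])"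

(* F(2x/sqrt c) = ((1/sqrt c) A_x e_3 A_x^{-1}, A_x e_1 A_x^{-1}); i.e. F y uses x = (sqrt c / 2) y.
   The formula defines F on all of R^4 (a polynomial extension), whose derivative restricted
   to tangent vectors is the differential of F. *)
definition Fmap :: "real \<Rightarrow> real^4 \<Rightarrow> (real^3) \<times> (real^3)" where
  "Fmap c y = (let x = (sqrt c / 2) *\<^sub>R y in ((1 / sqrt c) *\<^sub>R col3 x, col1 x))"

(* V is a Levi-Civita parallel field along the curve gamma in S^2(c):
   V is tangent to the sphere along gamma and the tangential part of V' vanishes
   (covariant derivative of the induced connection = tangential projection). *)
definition parallel_along :: "real \<Rightarrow> (real \<Rightarrow> real^3) \<Rightarrow> (real \<Rightarrow> real^3) \<Rightarrow> bool" where
  "parallel_along c \<gamma> V \<longleftrightarrow>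
     (\<forall>t. \<gamma> t \<in> Sph c \<and> \<gamma> differentiable (at t) \<and> inner (V t) (\<gamma> t) = 0 \<and>
          (\<exists>V'. (V has_vector_derivative V') (at t) \<and> (\<exists>l. V' = l *\<^sub>R \<gamma> t)))"

definition hlift :: "real \<Rightarrow> real^3 \<Rightarrow> real^3 \<Rightarrow> real^3 \<Rightarrow> (real^3) \<times> (real^3)" where
  "hlift c p e X = (THE Z. \<exists>\<gamma> V. \<gamma> 0 = p \<and> V 0 = e \<and> (\<gamma> has_vector_derivative X) (at 0) \<and>
       parallel_along c \<gamma> V \<and> ((\<lambda>t. (\<gamma> t, V t)) has_vector_derivative Z) (at 0))"

definition vlift :: "real^3 \<Rightarrow> real^3 \<Rightarrow> real^3 \<Rightarrow> (real^3) \<times> (real^3)" where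
  "vlift p e X = vector_derivative (\<lambda>t. (p, e + t *\<^sub>R X)) (at 0)"

definition hv_decomp :: "real \<Rightarrow> real^3 \<Rightarrow> real^3 \<Rightarrow> (real^3) \<times> (real^3) \<Rightarrow> (real^3) \<times> (real^3)" where
  "hv_decomp c p e Z = (THE XY. inner (fst XY) p = 0 \<and> inner (snd XY) p = 0 \<and>
       Z = hlift c p e (fst XY) + vlift p e (snd XY))"

definition hCG :: "real \<Rightarrow> real \<Rightarrow> real \<Rightarrow> (real^3) \<times> (real^3) \<Rightarrow>
                    (real^3) \<times> (real^3) \<Rightarrow> (real^3) \<times> (real^3) \<Rightarrow> real" where
  "hCG m r c pe Z1 Z2 =
     (let p = fst pe; e = snd pe;
          (X1, Y1) = hv_decomp c p e Z1; (X2, Y2) = hv_decomp c p e Z2;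
          \<omega> = 1 / (1 + (norm e)^2)
      in inner X1 X2 + \<omega> powr m * (inner Y1 Y2 + r * inner Y1 e * inner Y2 e))"

definition Xf1 :: "real^4 \<Rightarrow> real^4" where
  "Xf1 x = vector [- x$4, - x$3, x$2, x$1]"
definition Xf2 :: "real^4 \<Rightarrow> real^4" where
  "Xf2 x = vector [- x$3, x$4, x$1, - x$2]"
definition Xf3 :: "real^4 \<Rightarrow> real^4" where
  "Xf3 x = vector [- x$2, x$1, - x$4, x$3]"

(* Writing a tangent vector
   u = a1 X1 + a2 X2 + a3 (eps X3) (X1,X2,X3 Euclidean-orthonormal in T_x S^3),
   a1 = <u,X1>, a2 = <u,X2>, a3 = <u,X3>/eps, and g_eps(u,w) = sum a_i b_i. *)
definition berger :: "real \<Rightarrow> real^4 \<Rightarrow> real^4 \<Rightarrow> real^4 \<Rightarrow> real" where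
  "berger \<epsilon> x u w = inner u (Xf1 x) * inner w (Xf1 x) + inner u (Xf2 x) * inner w (Xf2 x)
      + (inner u (Xf3 x) / \<epsilon>) * (inner w (Xf3 x) / \<epsilon>)"

end

theory Submission imports Defs begin

(* Write x = (sqrt c / 2) y for y in S^3(c/4); x is a unit vector of R^4, the columns col1 x,
   col2 x, col3 x of rho(A_x) are quadratic in x and form an orthonormal frame of R^3, and
   F y = (col3 x / sqrt c, col1 x).  So the theorem reduces to polynomial identities in x.

   The lifts are computed explicitly: X^v = (0, X) and, via parallel transport
   along a great circle, X^h = (X, -c <e,X> p).  This makes the horizontal/vertical splitting of
   dF u explicit, and h_{m,r}(dF u, dF w) becomes a combination of inner products of derivatives
   of col1 and col3, evaluated in the frame X_1, X_2, X_3 of S^3.  Both metric claims follow.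

   F is continuous, onto T^1 S^2(c) (every unit vector is col3 of a point, and
   the circle action x -> e^{it} x rotates col1 inside the fibre), and its fibres are exactly the
   antipodal pairs.  A general lemma shows that any such map on a compact antipodally symmetric
   set is a covering map: the two open half spaces around y and -y are mapped homeomorphically
   onto a common open neighbourhood of F y. *)

lemma inner4: "inner (x::real^4) y = x$1*y$1 + x$2*y$2 + x$3*y$3 + x$4*y$4"
  by (simp add: inner_vec_def sum_4)

lemma inner3: "inner (x::real^3) y = x$1*y$1 + x$2*y$2 + x$3*y$3"
  by (simp add: inner_vec_def sum_3)

lemma vector_4 [simp]:
  "(vector [a, b, c, d] :: ('a::zero)^4)$1 = a"
  "(vector [a, b, c, d] :: ('a::zero)^4)$2 = b"
  "(vector [a, b, c, d] :: ('a::zero)^4)$3 = c"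
  "(vector [a, b, c, d] :: ('a::zero)^4)$4 = d"
  unfolding vector_def by simp_all

lemma Sph_iff: "x \<in> Sph c \<longleftrightarrow> norm x = 1 / sqrt c"
  by (simp add: Sph_def)

lemma Sph_rescaled_unit:
  assumes c: "c > 0" and y: "y \<in> Sph (c/4)"
  shows "inner ((sqrt c / 2) *\<^sub>R y) ((sqrt c / 2) *\<^sub>R y) = (1::real)"
proof -
  have "norm y = 2 / sqrt c" using y c by (simp add: Sph_iff real_sqrt_divide)
  then have "norm ((sqrt c / 2) *\<^sub>R y) = 1" using c by simp
  then show ?thesis using norm_eq_1 by blast
qed

section \<open>The frame rho(A_x) and its derivative\<close>

text \<open>The columns of rho(A_x) as real polynomials in x; col2 x is the coordinate vector of
  A_x e_2 A_x^{-1}, which only enters through the orthonormal frame expansion below.\<close>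

lemma col1_coords:
  "col1 x = vector [x$1^2 - x$2^2 - x$3^2 + x$4^2, 2*(x$1*x$2 + x$3*x$4), 2*(x$2*x$4 - x$1*x$3)]"
  unfolding col1_def Let_def by (simp add: vec_eq_iff forall_3 power2_eq_square algebra_simps)

lemma col3_coords:
  "col3 x = vector [2*(x$1*x$3 + x$2*x$4), 2*(x$2*x$3 - x$1*x$4), x$1^2 + x$2^2 - x$3^2 - x$4^2]"
  unfolding col3_def Let_def by (simp add: vec_eq_iff forall_3 power2_eq_square algebra_simps cmod_def)

definition col2 :: "real^4 \<Rightarrow> real^3" where
  "col2 x = vector [2*(x$3*x$4 - x$1*x$2), x$1^2 - x$2^2 + x$3^2 - x$4^2, 2*(x$1*x$4 + x$2*x$3)]"

definition dcol1 :: "real^4 \<Rightarrow> real^4 \<Rightarrow> real^3" where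
  "dcol1 x v = vector [2*(x$1* v$1 - x$2* v$2 - x$3* v$3 + x$4* v$4),
     2*(x$1* v$2 + v$1*x$2 + x$3* v$4 + v$3*x$4), 2*(x$2* v$4 + v$2*x$4 - x$1* v$3 - v$1*x$3)]"

definition dcol3 :: "real^4 \<Rightarrow> real^4 \<Rightarrow> real^3" where
  "dcol3 x v = vector [2*(x$1* v$3 + v$1*x$3 + x$2* v$4 + v$2*x$4),
     2*(x$2* v$3 + v$2*x$3 - x$1* v$4 - v$1*x$4), 2*(x$1* v$1 + x$2* v$2 - x$3* v$3 - x$4* v$4)]"

lemma dcol_scaleR: "dcol1 x (a *\<^sub>R v) = a *\<^sub>R dcol1 x v" "dcol3 x (a *\<^sub>R v) = a *\<^sub>R dcol3 x v"
  by (simp_all add: dcol1_def dcol3_def vec_eq_iff forall_3 algebra_simps)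

text \<open>The part of dcol1 x v orthogonal to col3 x; up to the factor sqrt c / 2 it is the vertical
  component of the differential of F.\<close>
definition vert_part :: "real^4 \<Rightarrow> real^4 \<Rightarrow> real^3" where
  "vert_part x v = dcol1 x v + inner (col1 x) (dcol3 x v) *\<^sub>R col3 x"

lemmas coord_defs = col1_coords col3_coords col2_def dcol1_def dcol3_def Xf1_def Xf2_def Xf3_def
  inner3 inner4

lemma col1_col3_orthogonal: "inner (col1 x) (col3 x) = 0"
  unfolding coord_defs by simp algebra

lemma col1_col3_unit: "inner x (x::real^4) = 1 \<Longrightarrow> inner (col1 x) (col1 x) = 1 \<and> inner (col3 x) (col3 x) = 1"
  unfolding coord_defs by simp algebra

lemma frame_expansion:
  assumes "inner x (x::real^4) = 1"
  shows "v = inner v (col1 x) *\<^sub>R col1 x + inner v (col2 x) *\<^sub>R col2 x + inner v (col3 x) *\<^sub>R col3 x"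
    and "inner v v = (inner v (col1 x))^2 + (inner v (col2 x))^2 + (inner v (col3 x))^2"
  using assms unfolding vec_eq_iff forall_3 coord_defs by (simp; algebra)+

lemma dcol3_orthogonal_col3: "inner x (x::real^4) = 1 \<Longrightarrow> inner x v = 0 \<Longrightarrow> inner (dcol3 x v) (col3 x) = 0"
  unfolding coord_defs by simp algebra

lemma dcol1_orthogonal_col1: "inner x (x::real^4) = 1 \<Longrightarrow> inner x v = 0 \<Longrightarrow> inner (dcol1 x v) (col1 x) = 0"
  unfolding coord_defs by simp algebra

lemma dcol_cross: "inner x (x::real^4) = 1 \<Longrightarrow> inner x v = 0 \<Longrightarrow>
    inner (dcol1 x v) (col3 x) + inner (col1 x) (dcol3 x v) = 0"
  unfolding coord_defs by (simp add: algebra_simps power2_eq_square)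

lemma tangent_frame_S3: "inner x (x::real^4) = 1 \<Longrightarrow> inner x v = 0 \<Longrightarrow> inner x w = 0 \<Longrightarrow>
    inner v w = inner v (Xf1 x) * inner w (Xf1 x) + inner v (Xf2 x) * inner w (Xf2 x)
      + inner v (Xf3 x) * inner w (Xf3 x)"
  unfolding coord_defs by simp algebra

lemma dcol3_inner: "inner x (x::real^4) = 1 \<Longrightarrow> inner x v = 0 \<Longrightarrow> inner x w = 0 \<Longrightarrow>
    inner (dcol3 x v) (dcol3 x w) = 4 * (inner v (Xf1 x) * inner w (Xf1 x) + inner v (Xf2 x) * inner w (Xf2 x))"
  unfolding coord_defs by simp algebra

lemma vert_part_inner: "inner x (x::real^4) = 1 \<Longrightarrow> inner x v = 0 \<Longrightarrow> inner x w = 0 \<Longrightarrow>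
    inner (vert_part x v) (vert_part x w) = 4 * (inner v (Xf3 x) * inner w (Xf3 x))"
  unfolding vert_part_def inner_add_left inner_add_right inner_scaleR_left inner_scaleR_right
  unfolding coord_defs by simp algebra

lemma vert_part_orthogonal_col1:
  assumes "inner x (x::real^4) = 1" "inner x v = 0"
  shows "inner (vert_part x v) (col1 x) = 0"
  using dcol1_orthogonal_col1[OF assms] col1_col3_orthogonal[of x]
  by (simp add: vert_part_def inner_add_left inner_add_right inner_commute)

lemma vec_has_derivative_componentwise:
  fixes f :: "'a::real_normed_vector \<Rightarrow> real^'n"
  assumes "\<And>k. ((\<lambda>y. f y $ k) has_derivative (\<lambda>v. f' v $ k)) (at x)"
  shows "(f has_derivative f') (at x)"
proof (subst has_derivative_componentwise_within, intro ballI)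
  fix i :: "real^'n" assume "i \<in> Basis"
  then obtain k where k: "i = axis k 1" unfolding Basis_vec_def by auto
  show "((\<lambda>y. f y \<bullet> i) has_derivative (\<lambda>v. f' v \<bullet> i)) (at x)"
    using assms[of k] unfolding k inner_axis by simp
qed

lemma vec_nth_has_derivative: "((\<lambda>y. y $ i) has_derivative (\<lambda>v. v $ i)) F"
  by (rule bounded_linear_imp_has_derivative) (rule bounded_linear_vec_nth)

lemma col_has_derivative:
  shows "(col1 has_derivative dcol1 x) (at x)" and "(col3 has_derivative dcol3 x) (at x)"
proof (rule_tac [!] vec_has_derivative_componentwise)
  show "((\<lambda>y. col1 y $ k) has_derivative (\<lambda>v. dcol1 x v $ k)) (at x)" for k :: 3
    using exhaust_3[of k] unfolding col1_coords dcol1_def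
    by (elim disjE) (simp, rule has_derivative_eq_rhs, (intro derivative_eq_intros),
        (rule vec_nth_has_derivative refl)+, simp add: fun_eq_iff algebra_simps power2_eq_square)+
  show "((\<lambda>y. col3 y $ k) has_derivative (\<lambda>v. dcol3 x v $ k)) (at x)" for k :: 3
    using exhaust_3[of k] unfolding col3_coords dcol3_def
    by (elim disjE) (simp, rule has_derivative_eq_rhs, (intro derivative_eq_intros),
        (rule vec_nth_has_derivative refl)+, simp add: fun_eq_iff algebra_simps power2_eq_square)+
qed

definition dFmap :: "real \<Rightarrow> real^4 \<Rightarrow> real^4 \<Rightarrow> (real^3) \<times> (real^3)" where
  "dFmap c y u = ((1 / sqrt c) *\<^sub>R dcol3 ((sqrt c / 2) *\<^sub>R y) ((sqrt c / 2) *\<^sub>R u),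
                  dcol1 ((sqrt c / 2) *\<^sub>R y) ((sqrt c / 2) *\<^sub>R u))"

lemma Fmap_has_derivative: "(Fmap c has_derivative dFmap c y) (at y)"
proof -
  define s where "s = sqrt c / 2"
  have scale: "((\<lambda>y. s *\<^sub>R y) has_derivative (\<lambda>u. s *\<^sub>R u)) (at y)"
    by (rule bounded_linear_imp_has_derivative) (simp add: bounded_linear_scaleR_right)
  have d1: "((\<lambda>y. col1 (s *\<^sub>R y)) has_derivative (\<lambda>u. dcol1 (s *\<^sub>R y) (s *\<^sub>R u))) (at y)"
    using has_derivative_compose[OF scale col_has_derivative(1)] by (simp add: o_def)
  have d3: "((\<lambda>y. col3 (s *\<^sub>R y)) has_derivative (\<lambda>u. dcol3 (s *\<^sub>R y) (s *\<^sub>R u))) (at y)"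
    using has_derivative_compose[OF scale col_has_derivative(2)] by (simp add: o_def)
  show ?thesis
    unfolding Fmap_def dFmap_def Let_def s_def[symmetric]
    by (rule has_derivative_Pair[OF has_derivative_scaleR_right[OF d3] d1])
qed

section \<open>Horizontal and vertical lifts on T S^2(c)\<close>

text \<open>Any parallel field V along a curve gamma with gamma(0) = p, gamma'(0) = X has
  V'(0) = -c <V(0), X> p: V' is normal, and differentiating <V, gamma> = 0 fixes its length.\<close>
lemma parallel_derivative:
  assumes c: "c > 0" and p: "norm p = 1 / sqrt c"
    and \<gamma>0: "\<gamma> 0 = p" and V0: "V 0 = e" and \<gamma>': "(\<gamma> has_vector_derivative X) (at 0)"
    and par: "parallel_along c \<gamma> V" and Z: "((\<lambda>t. (\<gamma> t, V t)) has_vector_derivative Z) (at 0)"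
  shows "Z = (X, (- c * inner e X) *\<^sub>R p)"
proof -
  from par obtain V' l where V': "(V has_vector_derivative V') (at 0)" and V'_normal: "V' = l *\<^sub>R \<gamma> 0"
    unfolding parallel_along_def by blast
  have "((\<lambda>t. (\<gamma> t, V t)) has_vector_derivative (X, V')) (at 0)"
    by (rule has_vector_derivative_Pair[OF \<gamma>' V'])
  with Z have Z_eq: "Z = (X, V')" by (rule vector_derivative_unique_at)
  have orth: "\<And>t. inner (V t) (\<gamma> t) = 0" using par unfolding parallel_along_def by blast
  have "((\<lambda>t. inner (V t) (\<gamma> t)) has_vector_derivative (inner (V 0) X + inner V' (\<gamma> 0))) (at 0)"
    by (rule bounded_bilinear.has_vector_derivative[OF bounded_bilinear_inner V' \<gamma>'])
  moreover have "((\<lambda>t. inner (V t) (\<gamma> t)) has_vector_derivative 0) (at 0)"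
    using orth by simp
  ultimately have "inner (V 0) X + inner V' (\<gamma> 0) = 0"
    by (rule vector_derivative_unique_at)
  moreover have "inner p p = 1/c" using p c by (simp flip: power2_norm_eq_inner add: power_divide)
  ultimately have "inner e X + l / c = 0" using V'_normal \<gamma>0 V0 by simp
  then have "l = - c * inner e X" using c by (simp add: field_simps)
  then show ?thesis using Z_eq V'_normal \<gamma>0 by simp
qed

lemma great_circle_in_Sph:
  fixes p X :: "real^3"
  assumes c: "c > 0" and p: "norm p = 1/sqrt c" and Xp: "inner X p = 0" and X: "X \<noteq> 0"
  defines "k \<equiv> sqrt c * norm X"
  shows "cos (k*t) *\<^sub>R p + sin (k*t) *\<^sub>R ((1/k) *\<^sub>R X) \<in> Sph c"
    (is "?\<gamma> \<in> Sph c")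
proof -
  have k: "k > 0" using c X by (simp add: k_def)
  have "inner ?\<gamma> ?\<gamma> = (cos (k*t))^2 * inner p p + (sin (k*t) / k)^2 * inner X X"
    by (simp add: inner_add_left inner_add_right Xp inner_commute power2_eq_square)
  also have "\<dots> = (cos (k*t))^2 / c + (sin (k*t))^2 / c"
    using p c k by (simp flip: power2_norm_eq_inner add: k_def power_divide power_mult_distrib)
  also have "\<dots> = 1/c" by (metis add_divide_distrib sin_cos_squared_add2)
  finally have "(norm ?\<gamma>)^2 = 1/c" by (simp add: power2_norm_eq_inner)
  then have "norm ?\<gamma> = sqrt (1/c)" by (metis norm_ge_zero real_sqrt_unique)
  then show ?thesis by (simp add: Sph_iff real_sqrt_divide)
qed

text \<open>Parallel transport along the great circle through p in direction X exists, so the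
  defining description of X^h is satisfiable.\<close>
lemma parallel_transport_exists:
  fixes p e X :: "real^3"
  assumes c: "c > 0" and p: "norm p = 1/sqrt c" and Xp: "inner X p = 0" and ep: "inner e p = 0"
  shows "\<exists>\<gamma> V. \<gamma> 0 = p \<and> V 0 = e \<and> (\<gamma> has_vector_derivative X) (at 0) \<and>
       parallel_along c \<gamma> V \<and> ((\<lambda>t. (\<gamma> t, V t)) has_vector_derivative (X, (- c * inner e X) *\<^sub>R p)) (at 0)"
proof (cases "X = 0")
  case True
  have "parallel_along c (\<lambda>t. p) (\<lambda>t. e)"
    unfolding parallel_along_def using p ep by (auto simp: Sph_iff intro!: exI[of _ 0])
  moreover have "((\<lambda>t. (p, e)) has_vector_derivative ((0::real^3), (0::real^3))) (at 0)"
    by (rule has_vector_derivative_Pair) simp_all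
  ultimately show ?thesis using True
    by (intro exI[of _ "\<lambda>t. p"] exI[of _ "\<lambda>t. e"]) simp
next
  case False
  define k where "k = sqrt c * norm X"
  have k: "k > 0" using c False by (simp add: k_def)
  have pp: "inner p p = 1/c" using p c by (simp flip: power2_norm_eq_inner add: power_divide)
  have XX: "inner X X = k^2 / c" using c by (simp flip: power2_norm_eq_inner add: k_def power_mult_distrib)
  define \<beta> where "\<beta> = inner e X / (norm X)^2"
  define \<delta> where "\<delta> = sqrt c * inner e X / norm X"
  have \<beta>k: "\<beta> * k = \<delta>" using False by (simp add: \<beta>_def \<delta>_def k_def power2_eq_square field_simps)
  have \<delta>k: "\<delta> * k = c * inner e X" using False c by (simp add: \<delta>_def k_def field_simps)
  define \<gamma> where "\<gamma> t = cos (k*t) *\<^sub>R p + sin (k*t) *\<^sub>R ((1/k) *\<^sub>R X)" for t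
  define V where "V t = e + (\<beta> * (cos (k*t) - 1)) *\<^sub>R X - (\<delta> * sin (k*t)) *\<^sub>R p" for t
  have \<gamma>': "(\<gamma> has_vector_derivative ((- k * sin (k*t)) *\<^sub>R p + cos (k*t) *\<^sub>R X)) (at t)" for t
    unfolding \<gamma>_def
    by (rule has_vector_derivative_eq_rhs, (intro derivative_eq_intros), (rule refl)+)
       (use k in \<open>simp add: algebra_simps\<close>)
  have V': "(V has_vector_derivative ((- \<delta> * k) *\<^sub>R \<gamma> t)) (at t)" for t
    unfolding V_def
    by (rule has_vector_derivative_eq_rhs, (intro derivative_eq_intros), (rule refl)+)
       (use k in \<open>simp add: \<gamma>_def algebra_simps flip: \<beta>k\<close>)
  have on_sphere: "\<gamma> t \<in> Sph c" for t
    unfolding \<gamma>_def k_def by (rule great_circle_in_Sph[OF c p Xp False])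
  have tangent: "inner (V t) (\<gamma> t) = 0" for t
  proof -
    have "inner (V t) (\<gamma> t) = sin (k*t) / k * inner e X + \<beta> * (cos (k*t) - 1) * (sin (k*t)/k) * inner X X
          - \<delta> * sin (k*t) * cos (k*t) * inner p p"
      unfolding V_def \<gamma>_def
      by (simp add: inner_add_left inner_add_right inner_diff_left Xp ep inner_commute algebra_simps)
    also have "\<dots> = 0"
      unfolding pp XX \<beta>_def \<delta>_def k_def using c False by (simp add: field_simps power2_eq_square)
    finally show ?thesis .
  qed
  have "parallel_along c \<gamma> V"
    unfolding parallel_along_def using on_sphere tangent V' \<gamma>' by (blast intro: differentiableI_vector)
  moreover have "((\<lambda>t. (\<gamma> t, V t)) has_vector_derivative (X, (- c * inner e X) *\<^sub>R p)) (at 0)"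
    using has_vector_derivative_Pair[OF \<gamma>' V', of 0] \<delta>k by (simp add: \<gamma>_def)
  moreover have "\<gamma> 0 = p" "V 0 = e" by (simp_all add: \<gamma>_def V_def)
  moreover have "(\<gamma> has_vector_derivative X) (at 0)" using \<gamma>'[of 0] by simp
  ultimately show ?thesis by blast
qed

lemma hlift_eq:
  fixes p e X :: "real^3"
  assumes c: "c > 0" and p: "norm p = 1/sqrt c" and "inner X p = 0" and "inner e p = 0"
  shows "hlift c p e X = (X, (- c * inner e X) *\<^sub>R p)"
  unfolding hlift_def
  by (rule the_equality, rule parallel_transport_exists[OF assms])
     (use parallel_derivative[OF c p] in blast)

lemma vlift_eq: "vlift p e Y = (0, Y)"
proof -
  have "((\<lambda>t. (p, e + t *\<^sub>R Y)) has_vector_derivative (0, Y)) (at 0)"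
    by (rule has_vector_derivative_Pair) (auto intro!: derivative_eq_intros)
  then show ?thesis unfolding vlift_def by (rule vector_derivative_at)
qed

text \<open>The decomposition Z = X^h + Y^v of a vector tangent to T^1 S^2(c) at (p, e); the tangency
  conditions are the derivatives of <p, p> and <p, e>.\<close>
lemma hv_decomp_eq:
  fixes p e Z1 Z2 :: "real^3"
  assumes c: "c > 0" and p: "norm p = 1/sqrt c" and ep: "inner e p = 0"
    and Z1p: "inner Z1 p = 0" and Z2p: "inner Z2 p + inner e Z1 = 0"
  shows "hv_decomp c p e (Z1, Z2) = (Z1, Z2 + (c * inner e Z1) *\<^sub>R p)"
  unfolding hv_decomp_def
proof (rule the_equality)
  have "inner p p = 1/c" using p c by (simp flip: power2_norm_eq_inner add: power_divide)
  then show "inner (fst (Z1, Z2 + (c * inner e Z1) *\<^sub>R p)) p = 0 \<and>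
    inner (snd (Z1, Z2 + (c * inner e Z1) *\<^sub>R p)) p = 0 \<and>
    (Z1, Z2) = hlift c p e (fst (Z1, Z2 + (c * inner e Z1) *\<^sub>R p)) + vlift p e (snd (Z1, Z2 + (c * inner e Z1) *\<^sub>R p))"
    using Z1p Z2p c by (simp add: hlift_eq[OF c p Z1p ep] vlift_eq inner_add_left)
next
  fix XY :: "(real^3) \<times> (real^3)"
  assume "inner (fst XY) p = 0 \<and> inner (snd XY) p = 0 \<and> (Z1, Z2) = hlift c p e (fst XY) + vlift p e (snd XY)"
  then have "(Z1, Z2) = (fst XY, (- c * inner e (fst XY)) *\<^sub>R p + snd XY)"
    by (simp add: hlift_eq[OF c p _ ep] vlift_eq)
  then show "XY = (Z1, Z2 + (c * inner e Z1) *\<^sub>R p)"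
    by (cases XY) auto
qed

lemma hv_decomp_dFmap:
  assumes c: "c > 0" and y: "y \<in> Sph (c/4)" and uy: "inner u y = 0"
  defines "x \<equiv> (sqrt c / 2) *\<^sub>R y"
  shows "hv_decomp c ((1 / sqrt c) *\<^sub>R col3 x) (col1 x) (dFmap c y u)
           = ((1/2) *\<^sub>R dcol3 x u, (sqrt c / 2) *\<^sub>R vert_part x u)"
proof -
  define s where "s = sqrt c / 2"
  define p where "p = (1 / sqrt c) *\<^sub>R col3 x"
  have sc: "sqrt c > 0" using c by simp
  have xx: "inner x x = 1" unfolding x_def by (rule Sph_rescaled_unit[OF c y])
  have xu: "inner x u = 0" using uy by (simp add: x_def inner_commute)
  have pn: "norm p = 1 / sqrt c" using col1_col3_unit[OF xx] sc by (simp add: p_def norm_eq_1)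
  have ep: "inner (col1 x) p = 0" by (simp add: p_def col1_col3_orthogonal)
  have dF: "dFmap c y u = ((1/2) *\<^sub>R dcol3 x u, s *\<^sub>R dcol1 x u)"
    using sc by (simp add: dFmap_def x_def s_def dcol_scaleR)
  have Z1p: "inner ((1/2) *\<^sub>R dcol3 x u) p = 0"
    by (simp add: p_def dcol3_orthogonal_col3[OF xx xu])
  have "inner (s *\<^sub>R dcol1 x u) p + inner (col1 x) ((1/2) *\<^sub>R dcol3 x u)
      = (1/2) * (inner (dcol1 x u) (col3 x) + inner (col1 x) (dcol3 x u))"
    using sc by (simp add: p_def s_def algebra_simps)
  then have Z2p: "inner (s *\<^sub>R dcol1 x u) p + inner (col1 x) ((1/2) *\<^sub>R dcol3 x u) = 0"
    by (simp add: dcol_cross[OF xx xu])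
  have "(c * inner (col1 x) ((1/2) *\<^sub>R dcol3 x u)) *\<^sub>R p = s *\<^sub>R (inner (col1 x) (dcol3 x u) *\<^sub>R col3 x)"
    using c sc by (simp add: p_def s_def field_simps)
  then show ?thesis
    unfolding dF p_def[symmetric] s_def[symmetric] hv_decomp_eq[OF c pn ep Z1p Z2p]
    by (simp add: vert_part_def scaleR_add_right)
qed

text \<open>The pull-back of h_{m,r}: omega = 1/2 since e = col1 x is a unit vector, and the r-term
  vanishes because the vertical part is orthogonal to e.\<close>
lemma hCG_pullback:
  assumes c: "c > 0" and y: "y \<in> Sph (c/4)" and uy: "inner u y = 0" and wy: "inner w y = 0"
  defines "x \<equiv> (sqrt c / 2) *\<^sub>R y"
  shows "hCG m r c (Fmap c y) (dFmap c y u) (dFmap c y w) =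
     (1/4) * inner (dcol3 x u) (dcol3 x w) + (c / 4 / 2 powr m) * inner (vert_part x u) (vert_part x w)"
proof -
  have xx: "inner x x = 1" unfolding x_def by (rule Sph_rescaled_unit[OF c y])
  have xu: "inner x u = 0" and xw: "inner x w = 0" using uy wy by (simp_all add: x_def inner_commute)
  have F: "Fmap c y = ((1 / sqrt c) *\<^sub>R col3 x, col1 x)" by (simp add: Fmap_def x_def Let_def)
  have \<omega>: "1 / (1 + (norm (col1 x))^2) = (1/2::real)"
    using col1_col3_unit[OF xx] by (simp add: power2_norm_eq_inner)
  have "(sqrt c / 2) * (sqrt c / 2) = c / 4" using c by simp
  then show ?thesis
    unfolding hCG_def F
    using hv_decomp_dFmap[OF c y uy] hv_decomp_dFmap[OF c y wy] \<omega> c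
      vert_part_orthogonal_col1[OF xx xu] vert_part_orthogonal_col1[OF xx xw]
    by (simp add: Let_def x_def powr_divide)
qed

lemma Fmap_isometry_round:
  assumes c: "c > 0" and y: "y \<in> Sph (c/4)"
  shows "\<exists>F'. (Fmap c has_derivative F') (at y) \<and>
          (\<forall>u w. inner u y = 0 \<longrightarrow> inner w y = 0 \<longrightarrow>
             hCG (log 2 c) r c (Fmap c y) (F' u) (F' w) = inner u w)"
proof (intro exI conjI allI impI)
  fix u w :: "real^4" assume uy: "inner u y = 0" and wy: "inner w y = 0"
  define x where "x = (sqrt c / 2) *\<^sub>R y"
  have xx: "inner x x = 1" unfolding x_def by (rule Sph_rescaled_unit[OF c y])
  have xu: "inner x u = 0" and xw: "inner x w = 0" using uy wy by (simp_all add: x_def inner_commute)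
  show "hCG (log 2 c) r c (Fmap c y) (dFmap c y u) (dFmap c y w) = inner u w"
    using c unfolding hCG_pullback[OF c y uy wy] x_def[symmetric]
      dcol3_inner[OF xx xu xw] vert_part_inner[OF xx xu xw] tangent_frame_S3[OF xx xu xw]
    by simp
qed (rule Fmap_has_derivative)

lemma Fmap_isometry_berger:
  assumes \<epsilon>: "\<epsilon> > 0" and y: "y \<in> (Sph 1 :: (real^4) set)"
  shows "\<exists>F'. (Fmap 4 has_derivative F') (at y) \<and>
          (\<forall>u w. inner u y = 0 \<longrightarrow> inner w y = 0 \<longrightarrow>
             hCG (log 2 (\<epsilon>^2) + 2) r 4 (Fmap 4 y) (F' u) (F' w) = berger \<epsilon> y u w)"
proof (intro exI conjI allI impI)
  fix u w :: "real^4" assume uy: "inner u y = 0" and wy: "inner w y = 0"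
  have y': "y \<in> Sph (4/4)" using y by simp
  have yy: "inner y y = 1" using Sph_rescaled_unit[OF _ y'] by simp
  have yu: "inner y u = 0" and yw: "inner y w = 0" using uy wy by (simp_all add: inner_commute)
  have "2 powr (log 2 (\<epsilon>^2) + 2) = \<epsilon>^2 * 4" using \<epsilon> by (simp add: powr_add)
  then have weight: "4 / 4 / 2 powr (log 2 (\<epsilon>^2) + 2) = 1 / (4 * \<epsilon>^2)" by simp
  have "hCG (log 2 (\<epsilon>^2) + 2) r 4 (Fmap 4 y) (dFmap 4 y u) (dFmap 4 y w)
      = (1/4) * inner (dcol3 y u) (dcol3 y w) + (1 / (4 * \<epsilon>^2)) * inner (vert_part y u) (vert_part y w)"
    using hCG_pullback[OF _ y' uy wy, of "log 2 (\<epsilon>^2) + 2" r] weight by simp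
  also have "\<dots> = berger \<epsilon> y u w"
    unfolding dcol3_inner[OF yy yu yw] vert_part_inner[OF yy yu yw] berger_def
    using \<epsilon> by (simp add: field_simps power2_eq_square)
  finally show "hCG (log 2 (\<epsilon>^2) + 2) r 4 (Fmap 4 y) (dFmap 4 y u) (dFmap 4 y w) = berger \<epsilon> y u w" .
qed (rule Fmap_has_derivative)

section \<open>Antipodal quotient maps are coverings\<close>

text \<open>If W is a subset of f(S) whose preimage is the set of points off the hyperplane
  orthogonal to z, then f maps the open half {z \<bullet> y > 0} of S homeomorphically onto W: it is a
  continuous bijection, and closed since closed sets are images of compact sets cut by W.\<close>
lemma antipodal_half_homeomorphism:
  fixes f :: "'a::real_inner \<Rightarrow> 'b::t2_space"
  assumes S: "compact S" "\<And>y. y \<in> S \<Longrightarrow> - y \<in> S"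
    and cont: "continuous_on S f"
    and fibres: "\<And>y y'. y \<in> S \<Longrightarrow> y' \<in> S \<Longrightarrow> f y' = f y \<longleftrightarrow> y' = y \<or> y' = - y"
    and WS: "W \<subseteq> f ` S" and Wz: "\<And>y. y \<in> S \<Longrightarrow> f y \<in> W \<longleftrightarrow> inner z y \<noteq> 0"
  shows "\<exists>g. homeomorphism (S \<inter> {y. inner z y > 0}) W f g"
proof -
  define U where "U = S \<inter> {y. inner z y > 0}"
  have contU: "continuous_on U f" using cont by (rule continuous_on_subset) (auto simp: U_def)
  have "W \<subseteq> f ` U"
  proof
    fix q assume "q \<in> W"
    then obtain y where y: "y \<in> S" "q = f y" and "inner z y \<noteq> 0" using WS Wz by auto
    show "q \<in> f ` U"
    proof (cases "inner z y > 0")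
      case True
      then show ?thesis using y by (auto simp: U_def)
    next
      case False
      then have "- y \<in> U" using \<open>inner z y \<noteq> 0\<close> S(2)[OF y(1)] by (auto simp: U_def)
      moreover have "f (- y) = q" using fibres[of y "- y"] y S(2) by auto
      ultimately show ?thesis by (metis image_eqI)
    qed
  qed
  then have img: "f ` U = W" using Wz by (auto simp: U_def)
  have inj: "inj_on f U"
    by (rule inj_onI) (use fibres in \<open>force simp: U_def\<close>)
  have closed: "closedin (top_of_set W) (f ` C)" if C: "closedin (top_of_set U) C" for C
  proof -
    obtain C0 where C0: "closed C0" "C = U \<inter> C0" using C by (auto simp: closedin_closed)
    define D where "D = (S \<inter> {y. inner z y \<ge> 0}) \<inter> C0"
    have "compact D" unfolding D_def using S(1) C0(1) by (intro compact_Int_closed closed_halfspace_ge)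
    then have "closed (f ` D)"
      by (intro compact_imp_closed compact_continuous_image continuous_on_subset[OF cont]) (auto simp: D_def)
    moreover have "f ` C = W \<inter> f ` D"
      using Wz C0(2) by (auto simp: U_def D_def image_iff)
    ultimately show ?thesis by (simp add: closedin_closed_Int)
  qed
  show ?thesis
    using homeomorphism_injective_closed_map[OF contU img inj closed] unfolding U_def by blast
qed

lemma antipodal_quotient_covering:
  fixes f :: "'a::real_inner \<Rightarrow> 'b::t2_space"
  assumes S: "compact S" "\<And>y. y \<in> S \<Longrightarrow> - y \<in> S" "0 \<notin> S"
    and cont: "continuous_on S f" and img: "f ` S = T"
    and fibres: "\<And>y y'. y \<in> S \<Longrightarrow> y' \<in> S \<Longrightarrow> f y' = f y \<longleftrightarrow> y' = y \<or> y' = - y"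
  shows "covering_space S f T"
proof (rule covering_spaceI[OF cont img])
  fix q assume "q \<in> T"
  then obtain y0 where y0: "y0 \<in> S" "f y0 = q" using img by auto
  define K where "K = S \<inter> {y. inner y0 y = 0}"
  have "compact K" unfolding K_def using S(1) by (intro compact_Int_closed closed_hyperplane)
  then have "closed (f ` K)"
    by (intro compact_imp_closed compact_continuous_image continuous_on_subset[OF cont]) (auto simp: K_def)
  (* the evenly covered neighbourhood: T minus the image of the equator orthogonal to y0 *)
  define W where "W = T \<inter> - f ` K"
  have oW: "openin (top_of_set T) W" unfolding W_def using \<open>closed (f ` K)\<close> by (intro openin_open_Int) auto
  have W_iff: "f y \<in> W \<longleftrightarrow> inner y0 y \<noteq> 0" if y: "y \<in> S" for y
  proof
    assume "inner y0 y \<noteq> 0"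
    have "f y \<notin> f ` K"
    proof
      assume "f y \<in> f ` K"
      then obtain k where k: "k \<in> K" "f y = f k" by auto
      then have "y = k \<or> y = - k" using fibres[of k y] y by (auto simp: K_def)
      then show False using k \<open>inner y0 y \<noteq> 0\<close> by (auto simp: K_def)
    qed
    then show "f y \<in> W" using y img by (auto simp: W_def)
  qed (use y in \<open>auto simp: W_def K_def\<close>)
  have W_iff': "f y \<in> W \<longleftrightarrow> inner (- y0) y \<noteq> 0" if "y \<in> S" for y
    using W_iff[OF that] by simp
  have qW: "q \<in> W" using W_iff[OF y0(1)] y0 S(3) by auto
  have WS: "W \<subseteq> f ` S" using img by (auto simp: W_def)
  define v where "v = {S \<inter> {y. inner y0 y > 0}, S \<inter> {y. inner (- y0) y > 0}}"
  have "\<Union>v = S \<inter> f -` W" using W_iff by (auto simp: v_def)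
  moreover have "\<forall>u\<in>v. openin (top_of_set S) u"
    unfolding v_def by (auto intro!: openin_open_Int open_halfspace_gt open_halfspace_lt)
  moreover have "pairwise disjnt v"
    unfolding v_def pairwise_def disjnt_def by auto
  moreover have "\<forall>u\<in>v. \<exists>g. homeomorphism u W f g"
    unfolding v_def
    using antipodal_half_homeomorphism[OF S(1,2) cont fibres WS W_iff]
      antipodal_half_homeomorphism[OF S(1,2) cont fibres WS W_iff'] by blast
  ultimately show "\<exists>T'. q \<in> T' \<and> openin (top_of_set T) T' \<and>
         (\<exists>v. \<Union>v = S \<inter> f -` T' \<and> (\<forall>u\<in>v. openin (top_of_set S) u) \<and> pairwise disjnt v \<and>
              (\<forall>u\<in>v. \<exists>q. homeomorphism u T' f q))"
    using qW oW by blast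
qed

lemma frame_determines_point:
  assumes xx: "inner x x = (1::real)" and yy: "inner y y = 1"
    and e1: "col1 y = col1 x" and e3: "col3 y = col3 x"
  shows "y = x \<or> y = - x"
proof -
  have "col1 y $ i = col1 x $ i" "col3 y $ i = col3 x $ i" for i using e1 e3 by simp_all
  note coordinates = this(1)[of 1] this(1)[of 2] this(1)[of 3] this(2)[of 1] this(2)[of 2] this(2)[of 3]
  have "(inner x y)^2 = 1"
    using xx yy coordinates unfolding inner4 col1_coords col3_coords by simp algebra
  then have "inner x y = 1 \<or> inner x y = -1" by (simp add: power2_eq_1_iff)
  then have "inner (y - x) (y - x) = 0 \<or> inner (y + x) (y + x) = 0"
    using xx yy by (auto simp: inner_diff_left inner_diff_right inner_add_left inner_add_right inner_commute)
  then show ?thesis by (auto simp: add_eq_0_iff)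
qed

lemma Fmap_neg: "Fmap c (- y) = Fmap c y"
  by (simp add: Fmap_def Let_def col1_coords col3_coords)

lemma Fmap_fibres:
  assumes c: "c > 0" and y: "y \<in> Sph (c/4)" and y': "y' \<in> Sph (c/4)"
  shows "Fmap c y' = Fmap c y \<longleftrightarrow> y' = y \<or> y' = - y"
proof
  assume F: "Fmap c y' = Fmap c y"
  define s where "s = sqrt c / 2"
  have s0: "s \<noteq> 0" using c by (simp add: s_def)
  have "col3 (s *\<^sub>R y') = col3 (s *\<^sub>R y)" "col1 (s *\<^sub>R y') = col1 (s *\<^sub>R y)"
    using F c by (simp_all add: Fmap_def Let_def s_def)
  then have "s *\<^sub>R y' = s *\<^sub>R y \<or> s *\<^sub>R y' = - (s *\<^sub>R y)"
    using frame_determines_point[OF Sph_rescaled_unit[OF c y] Sph_rescaled_unit[OF c y']]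
    unfolding s_def by blast
  then show "y' = y \<or> y' = - y" using s0 by (metis scaleR_cancel_left scaleR_minus_right)
qed (use Fmap_neg in auto)

lemma hopf_map_surjective:
  fixes n :: "real^3"
  assumes nn: "inner n n = 1"
  shows "\<exists>x. inner x x = 1 \<and> col3 x = n"
proof -
  have nn': "(n$1)^2 + (n$2)^2 + (n$3)^2 = 1" using nn by (simp add: inner3 power2_eq_square)
  show ?thesis
  proof (cases "n$3 = -1")
    case True
    then have "n$1 = 0" "n$2 = 0" using nn' by (simp_all add: sum_power2_eq_zero_iff)
    then have "col3 (vector [0,0,1,0]) = n" using True by (simp add: col3_coords vec_eq_iff forall_3)
    moreover have "inner (vector [0,0,1,0]::real^4) (vector [0,0,1,0]) = 1" by (simp add: inner4)
    ultimately show ?thesis by blast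
  next
    case False
    have "(n$3)^2 \<le> 1" using nn' zero_le_power2[of "n$1"] zero_le_power2[of "n$2"] by linarith
    then have "1 + n$3 > 0" using False abs_square_le_1[of "n$3"] by linarith
    define a where "a = sqrt ((1 + n$3) / 2)"
    have a0: "a > 0" using \<open>1 + n$3 > 0\<close> by (simp add: a_def)
    have aa: "a^2 = (1 + n$3) / 2" using \<open>1 + n$3 > 0\<close> by (simp add: a_def)
    define x where "x = (vector [a, 0, n$1 / (2*a), - n$2 / (2*a)] :: real^4)"
    have "inner x x = 1"
      using nn' aa a0 by (simp add: x_def inner4 power2_eq_square field_simps) algebra
    moreover have "col3 x = n"
      unfolding vec_eq_iff forall_3 col3_coords x_def
      using nn' aa a0 by (simp add: power2_eq_square field_simps) algebra
    ultimately show ?thesis by blast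
  qed
qed

definition circle_action :: "real \<Rightarrow> real^4 \<Rightarrow> real^4" where
  "circle_action t x = vector [x$1 * cos t - x$2 * sin t, x$1 * sin t + x$2 * cos t,
                              x$3 * cos t - x$4 * sin t, x$3 * sin t + x$4 * cos t]"

lemma circle_action_props:
  "inner (circle_action t x) (circle_action t x) = inner x x"
  "col3 (circle_action t x) = col3 x"
  "col1 (circle_action t x) = cos (2*t) *\<^sub>R col1 x + sin (2*t) *\<^sub>R col2 x"
proof -
  have sc: "(sin t)^2 + (cos t)^2 = 1" by simp
  show "inner (circle_action t x) (circle_action t x) = inner x x"
    unfolding circle_action_def inner4 vector_4 using sc by algebra
  show "col3 (circle_action t x) = col3 x"
    unfolding vec_eq_iff forall_3 circle_action_def col3_coords vector_4 vector_3 using sc by algebra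
  show "col1 (circle_action t x) = cos (2*t) *\<^sub>R col1 x + sin (2*t) *\<^sub>R col2 x"
    unfolding vec_eq_iff forall_3 circle_action_def col1_coords col2_def cos_double sin_double
    by simp algebra
qed

text \<open>F maps S^3(c/4) onto T^1 S^2(c): pick x with col3 x = sqrt c p, then turn col1 x into the
  prescribed unit vector v orthogonal to p by the circle action.\<close>
lemma Fmap_image:
  assumes c: "c > 0"
  shows "Fmap c ` Sph (c/4) = UT c"
proof
  have sc: "sqrt c > 0" using c by simp
  show "Fmap c ` Sph (c/4) \<subseteq> UT c"
  proof (rule image_subsetI)
    fix y :: "real^4" assume y: "y \<in> Sph (c/4)"
    define x where "x = (sqrt c / 2) *\<^sub>R y"
    have "inner x x = 1" unfolding x_def by (rule Sph_rescaled_unit[OF c y])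
    then show "Fmap c y \<in> UT c"
      using col1_col3_unit[of x] col1_col3_orthogonal[of x] sc
      by (simp add: UT_def Fmap_def x_def[symmetric] Let_def norm_eq_1 inner_commute)
  qed
  show "UT c \<subseteq> Fmap c ` Sph (c/4)"
  proof
    fix q assume "q \<in> UT c"
    then obtain p v where q: "q = (p, v)" and p: "norm p = 1 / sqrt c" and v: "norm v = 1"
      and pv: "inner p v = 0"
      unfolding UT_def by auto
    define n where "n = sqrt c *\<^sub>R p"
    have "norm n = 1" using p sc by (simp add: n_def)
    then obtain x0 where x0: "inner x0 x0 = 1" "col3 x0 = n" using hopf_map_surjective norm_eq_1 by blast
    have v3: "inner v (col3 x0) = 0" using pv by (simp add: x0(2) n_def inner_commute)
    have "(inner v (col1 x0))^2 + (inner v (col2 x0))^2 = 1"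
      using frame_expansion(2)[OF x0(1), of v] v3 v by (simp add: norm_eq_1)
    then obtain \<phi> where \<phi>: "inner v (col1 x0) = cos \<phi>" "inner v (col2 x0) = sin \<phi>"
      using sincos_total_2pi by metis
    define x where "x = circle_action (\<phi>/2) x0"
    have "inner x x = 1" "col3 x = n" "col1 x = v"
      using x0 frame_expansion(1)[OF x0(1), of v] v3 \<phi> by (simp_all add: x_def circle_action_props)
    moreover define y where "y = (2 / sqrt c) *\<^sub>R x"
    ultimately have "y \<in> Sph (c/4)" "Fmap c y = (p, v)"
      using sc by (simp_all add: y_def Sph_iff real_sqrt_divide Fmap_def Let_def n_def norm_eq_1[symmetric])
    then show "q \<in> Fmap c ` Sph (c/4)" unfolding q by (metis image_eqI)
  qed
qed

theorem theorem1:
  fixes c :: real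
  assumes "c > 0"
  shows "covering_space (Sph (c/4) :: (real^4) set) (Fmap c) (UT c)
    \<and> (\<forall>y \<in> Sph (c/4). Fmap c (- y) = Fmap c y)
    \<and> (\<forall>y \<in> Sph (c/4). \<forall>y' \<in> Sph (c/4). Fmap c y' = Fmap c y \<longleftrightarrow> y' = y \<or> y' = - y)
    \<and> (\<forall>r \<ge> 0. \<forall>y \<in> Sph (c/4). \<exists>F'. (Fmap c has_derivative F') (at y) \<and>
          (\<forall>u w. inner u y = 0 \<longrightarrow> inner w y = 0 \<longrightarrow>
             hCG (log 2 c) r c (Fmap c y) (F' u) (F' w) = inner u w))
    \<and> (\<forall>\<epsilon> > 0. \<forall>r \<ge> 0. \<forall>y \<in> (Sph 1 :: (real^4) set). \<exists>F'. (Fmap 4 has_derivative F') (at y) \<and>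
          (\<forall>u w. inner u y = 0 \<longrightarrow> inner w y = 0 \<longrightarrow>
             hCG (log 2 (\<epsilon>^2) + 2) r 4 (Fmap 4 y) (F' u) (F' w) = berger \<epsilon> y u w))"
proof -
  have "covering_space (Sph (c/4) :: (real^4) set) (Fmap c) (UT c)"
  proof (rule antipodal_quotient_covering)
    show "compact (Sph (c/4) :: (real^4) set)" by (simp add: Sph_def)
    show "continuous_on (Sph (c/4)) (Fmap c)"
      by (intro continuous_at_imp_continuous_on ballI has_derivative_continuous[OF Fmap_has_derivative])
  qed (use assms Fmap_image Fmap_fibres in \<open>auto simp: Sph_iff\<close>)
  then show ?thesis
    using Fmap_neg Fmap_fibres[OF assms] Fmap_isometry_round[OF assms] Fmap_isometry_berger by blast
qed

end
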